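(* Let $\pi=\pi_{-n}\cdots\pi_{-1}\pi_1\cdots\pi_n$ be a signed permutation of $[n]$ in full notation. Let $i>0$ be the largest index such that $\pi_i<0$ if such an index exists, and $i=0$ otherwise. Let $\sigma_L=\pi_{-n}\cdots\pi_{-(i+1)}$, $\tau=\pi_{-i}\cdots\pi_{-1}\pi_1\cdots\pi_i$ (empty if $i=0$), and $\sigma_R=\pi_{i+1}\cdots\pi_n$, so that $\pi=\sigma_L\tau\sigma_R$. Then $\pi$ is $\underline{2}31$-avoiding if and only if all of the following hold: (1) the positive entries of $\tau$ appear in decreasing order; (2) $\sigma_R$ avoids the pattern $231$; (3) for every positive entry $x$ of $\tau$, all entries of $\sigma_R$ smaller than $x$ appear to the left of all entries of $\sigma_R$ larger than $x$.
   Context: A signed permutation of $[n]$ is a sequence $(\pi_1,\dots,\pi_n)$ of elements of $\{\pm1,\dots,\pm n\}$ with $\{|\pi_1|,\dots,|\pi_n|\}=[n]$; its full notation is the string $\pi_{-n}\pi_{-(n-1)}\cdots\pi_{-1}\pi_1\pi_2\cdots\pi_n$ with $\pi_{-j}:=-\pi_j$. A string $s$ of integers contains the pattern $231$ if there are positions $k<l<m$ with $s_m<s_k<s_l$, and avoids it otherwise. A signed permutation in full notation is $\underline{2}31$-avoiding if there are no positions $k<l<m$ (in the order of the full notation) with $\pi_m<\pi_k<\pi_l$ and $\pi_k>0$. *)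

theory Defs
  imports Main
begin

text \<open>A signed permutation of [n] is represented as the list [pi_1, ..., pi_n] of integers.\<close>
definition signed_perm :: "nat \<Rightarrow> int list \<Rightarrow> bool" where
  "signed_perm n p \<longleftrightarrow> length p = n \<and> distinct (map abs p) \<and>
     set (map abs p) = int ` {1..n}"

definition full_notation :: "int list \<Rightarrow> int list" where
  "full_notation p = rev (map uminus p) @ p"

definition contains231 :: "int list \<Rightarrow> bool" where
  "contains231 s \<longleftrightarrow> (\<exists>k l m. k < l \<and> l < m \<and> m < length s \<and> s ! m < s ! k \<and> s ! k < s ! l)"

definition avoids231 :: "int list \<Rightarrow> bool" where
  "avoids231 s \<longleftrightarrow> \<not> contains231 s"

definition avoids_u231 :: "int list \<Rightarrow> bool" where
  "avoids_u231 s \<longleftrightarrow> \<not> (\<exists>k l m. k < l \<and> l < m \<and> m < length s \<and>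
       s ! m < s ! k \<and> s ! k < s ! l \<and> s ! k > 0)"

text \<open>Largest index i > 0 (1-based) with pi_i < 0, or 0 if none.\<close>
definition last_neg_index :: "int list \<Rightarrow> nat" where
  "last_neg_index p = (if \<exists>j < length p. p ! j < 0
      then Suc (GREATEST j. j < length p \<and> p ! j < 0) else 0)"

definition sigmaL :: "int list \<Rightarrow> int list" where
  "sigmaL p = rev (map uminus (drop (last_neg_index p) p))"

definition tau :: "int list \<Rightarrow> int list" where
  "tau p = rev (map uminus (take (last_neg_index p) p)) @ take (last_neg_index p) p"

definition sigmaR :: "int list \<Rightarrow> int list" where
  "sigmaR p = drop (last_neg_index p) p"

lemma full_notation_decomp: "full_notation p = sigmaL p @ tau p @ sigmaR p"
  unfolding full_notation_def sigmaL_def tau_def sigmaR_def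
  by (metis append_assoc append_take_drop_id rev_append map_append)

end

theory Submission
  imports Defs
begin

(* The full notation splits as L @ T @ R with L \<le> 0 \<le> R, where T = tau p ends in the
   negative entry pi_i. The "2" of an occurrence is positive, so it lies in T or in R. If it lies
   in R, the whole occurrence is a 231 in R. If it lies in T together with the "3", these form a
   positive ascent of T; conversely every positive ascent of T completes to an occurrence with the
   last entry of T as the "1". Otherwise the "3" and "1" form an inversion of R straddling the "2". *)

lemma sorted_wrt_filter_iff_nth:
  "sorted_wrt R (filter P xs) \<longleftrightarrow>
   (\<forall>i j. i < j \<longrightarrow> j < length xs \<longrightarrow> P (xs ! i) \<longrightarrow> P (xs ! j) \<longrightarrow> R (xs ! i) (xs ! j))"
  by (induction xs) (auto simp add: in_set_conv_nth Ball_def nth_Cons split: nat.split)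

lemma not_avoids_u231I:
  assumes "k < l" "l < m" "m < length s" "s ! m < s ! k" "s ! k < s ! l" "0 < s ! k"
  shows "\<not> avoids_u231 s"
  using assms unfolding avoids_u231_def by blast

lemma u231_of_positive_ascent:
  assumes "last T < 0" "i < j" "j < length T" "0 < T ! i" "T ! i < T ! j"
  shows "\<not> avoids_u231 (L @ T @ R)"
proof -
  let ?e = "length T - 1"
  have last: "T ! ?e = last T"
    using assms(3) by (metis last_conv_nth list.size(3) not_less_zero)
  have "j \<noteq> ?e"
    using assms last by auto
  with assms(3) have "j < ?e" by simp
  then show ?thesis
    using assms last
    by (intro not_avoids_u231I[of "length L + i" "length L + j" "length L + ?e"])
       (auto simp: nth_append)
qed

lemma u231_of_231:
  assumes "\<forall>x \<in> set R. 0 \<le> x" "contains231 R"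
  shows "\<not> avoids_u231 (xs @ R)"
proof -
  obtain k l m where "k < l" "l < m" "m < length R" "R ! m < R ! k" "R ! k < R ! l"
    using assms(2) unfolding contains231_def by blast
  moreover have "0 \<le> R ! m"
    using assms(1) \<open>m < length R\<close> by simp
  ultimately show ?thesis
    by (intro not_avoids_u231I[of "length xs + k" "length xs + l" "length xs + m"]) auto
qed

lemma u231_of_straddling_inversion:
  assumes "x \<in> set xs" "0 < x" "b < a" "a < length R" "R ! a < x" "x < R ! b"
  shows "\<not> avoids_u231 (xs @ R)"
proof -
  obtain t where "t < length xs" "xs ! t = x"
    using assms(1) by (auto simp: in_set_conv_nth)
  with assms show ?thesis
    by (intro not_avoids_u231I[of t "length xs + b" "length xs + a"]) (auto simp: nth_append)
qed

lemma u231_in_blocks_cases: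
  assumes L_nonpos: "\<forall>x \<in> set L. x \<le> 0" and "\<not> avoids_u231 (L @ T @ R)"
  obtains (T_ascent) i j where "i < j" "j < length T" "0 < T ! i" "T ! i < T ! j"
    | (straddling_inversion) x a b where "x \<in> set T" "0 < x" "b < a" "a < length R" "R ! a < x" "x < R ! b"
    | (R_231) "contains231 R"
proof -
  let ?s = "L @ T @ R"
  obtain k l m where kl: "k < l" and lm: "l < m" and m: "m < length ?s"
    and vals: "?s ! m < ?s ! k" "?s ! k < ?s ! l" and pos: "0 < ?s ! k"
    using assms(2) unfolding avoids_u231_def by blast
  have "length L \<le> k"
  proof (rule ccontr)
    assume "\<not> length L \<le> k"
    then have "?s ! k \<in> set L" by (simp add: nth_append)
    with L_nonpos pos show False by auto
  qed
  then obtain k' where k': "k = length L + k'" using le_Suc_ex by blast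
  obtain l' m' where l': "l = length L + l'" and m': "m = length L + m'"
    using kl lm k' by (metis less_imp_add_positive add.assoc order.strict_trans)
  show thesis
  proof (cases "k' < length T")
    case k'T: True
    show thesis
    proof (cases "l' < length T")
      case True
      then show thesis
        using T_ascent[of k' l'] k' l' kl vals pos k'T by (auto simp: nth_append)
    next
      case False
      then obtain b a where "l' = length T + b" "m' = length T + a"
        using lm l' m' by (metis le_Suc_ex less_imp_le_nat add_less_cancel_left not_le le_trans)
      then show thesis
        using straddling_inversion[OF nth_mem[OF k'T]] k' l' m' kl lm m vals pos k'T
        by (auto simp: nth_append)
    qed
  next
    case False
    then obtain c b a where "k' = length T + c" "l' = length T + b" "m' = length T + a"
      using kl lm k' l' m' by (metis le_Suc_ex not_le add_less_cancel_left less_imp_le_nat le_trans)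
    then have "contains231 R"
      unfolding contains231_def using kl lm m vals k' l' m'
      by (intro exI[of _ c] exI[of _ b] exI[of _ a]) (auto simp: nth_append)
    then show thesis by (rule R_231)
  qed
qed

lemma avoids_u231_blocks_iff:
  assumes L_nonpos: "\<forall>x \<in> set L. x \<le> 0" and R_nonneg: "\<forall>x \<in> set R. 0 \<le> x"
    and "distinct T" and T_last: "T = [] \<or> last T < 0"
  shows "avoids_u231 (L @ T @ R) \<longleftrightarrow>
    (sorted_wrt (>) (filter (\<lambda>x. x > 0) T)
     \<and> avoids231 R
     \<and> (\<forall>x \<in> set T. x > 0 \<longrightarrow>
          (\<forall>a b. a < length R \<and> b < length R \<and> R ! a < x \<and> R ! b > x \<longrightarrow> a < b)))"
    (is "_ \<longleftrightarrow> ?T_decreasing \<and> ?R_avoids \<and> ?separated")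
proof
  assume avoids: "avoids_u231 (L @ T @ R)"
  have ?T_decreasing
    unfolding sorted_wrt_filter_iff_nth
  proof (intro allI impI)
    fix i j assume ij: "i < j" "j < length T" "0 < T ! i" "0 < T ! j"
    have "T ! i \<noteq> T ! j"
      using \<open>distinct T\<close> ij by (simp add: nth_eq_iff_index_eq)
    moreover have "\<not> T ! i < T ! j"
      using u231_of_positive_ascent[of T i j L R] avoids T_last ij by auto
    ultimately show "T ! i > T ! j" by simp
  qed
  moreover have ?R_avoids
    using u231_of_231[OF R_nonneg, of "L @ T"] avoids unfolding avoids231_def by auto
  moreover have ?separated
  proof (intro ballI impI allI)
    fix x a b assume x: "x \<in> set T" "0 < x" and ab: "a < length R \<and> b < length R \<and> R ! a < x \<and> R ! b > x"
    have "a \<noteq> b" using ab by auto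
    moreover have "\<not> b < a"
      using u231_of_straddling_inversion[of x "L @ T" b a R] x ab avoids by auto
    ultimately show "a < b" by simp
  qed
  ultimately show "?T_decreasing \<and> ?R_avoids \<and> ?separated" by blast
next
  assume conds: "?T_decreasing \<and> ?R_avoids \<and> ?separated"
  show "avoids_u231 (L @ T @ R)"
  proof (rule ccontr)
    assume "\<not> avoids_u231 (L @ T @ R)"
    with L_nonpos show False
    proof (cases rule: u231_in_blocks_cases)
      case (T_ascent i j)
      then show False
        using conds unfolding sorted_wrt_filter_iff_nth by fastforce
    next
      case (straddling_inversion x a b)
      then have "b < length R" by simp
      with conds straddling_inversion have "a < b" by blast
      with \<open>b < a\<close> show False by simp
    next
      case R_231
      then show False
        using conds unfolding avoids231_def by blast
    qed
  qed
qed

lemma last_neg_index_cases: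
  obtains (no_neg) "last_neg_index p = 0" "\<forall>j < length p. 0 \<le> p ! j"
    | (last_neg) g where "last_neg_index p = Suc g" "g < length p" "p ! g < 0"
        "\<forall>j. g < j \<and> j < length p \<longrightarrow> 0 \<le> p ! j"
proof (cases "\<exists>j < length p. p ! j < 0")
  case False
  then have "last_neg_index p = 0"
    unfolding last_neg_index_def by simp
  moreover have "\<forall>j < length p. 0 \<le> p ! j"
    using False by (meson not_less)
  ultimately show thesis
    by (rule no_neg)
next
  case True
  let ?P = "\<lambda>j. j < length p \<and> p ! j < 0"
  let ?g = "Greatest ?P"
  obtain j0 where "?P j0"
    using True by blast
  then have "?P ?g"
    by (rule GreatestI_nat[of ?P j0 "length p"]) simp
  moreover have "0 \<le> p ! j" if "?g < j" "j < length p" for j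
    using that Greatest_le_nat[of ?P j "length p"] by fastforce
  ultimately show thesis
    using last_neg[of ?g] True unfolding last_neg_index_def by auto
qed

lemma sigmaR_nonneg: "\<forall>x \<in> set (sigmaR p). 0 \<le> x"
  by (cases p rule: last_neg_index_cases) (auto simp: sigmaR_def in_set_conv_nth)

lemma sigmaL_nonpos: "\<forall>x \<in> set (sigmaL p). x \<le> 0"
  using sigmaR_nonneg[of p] unfolding sigmaL_def sigmaR_def by auto

lemma tau_last_neg: "tau p = [] \<or> last (tau p) < 0"
proof (cases p rule: last_neg_index_cases)
  case no_neg
  then show ?thesis
    unfolding tau_def by simp
next
  case (last_neg g)
  then have "take (last_neg_index p) p = take g p @ [p ! g]"
    by (simp add: take_Suc_conv_app_nth)
  with last_neg show ?thesis
    unfolding tau_def by simp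
qed

lemma distinct_full_notation:
  assumes "signed_perm n p"
  shows "distinct (full_notation p)"
proof -
  have abs_distinct: "distinct (map abs p)" and "0 \<notin> set p"
    using assms unfolding signed_perm_def by force+
  then have "distinct p" "distinct (map uminus p)"
    by (simp_all add: distinct_map inj_on_def)
  moreover have "set (map uminus p) \<inter> set p = {}"
  proof (rule ccontr)
    assume "set (map uminus p) \<inter> set p \<noteq> {}"
    then obtain y where "y \<in> set p" "- y \<in> set p" by auto
    with abs_distinct \<open>0 \<notin> set p\<close> show False
      by (metis abs_minus_cancel distinct_map inj_on_def neg_equal_zero)
  qed
  ultimately show ?thesis
    unfolding full_notation_def by auto
qed

theorem lemma4p1:
  fixes n :: nat and p :: "int list"
  assumes "signed_perm n p"
  shows "avoids_u231 (full_notation p) \<longleftrightarrow>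
    (sorted_wrt (>) (filter (\<lambda>x. x > 0) (tau p))
     \<and> avoids231 (sigmaR p)
     \<and> (\<forall>x \<in> set (tau p). x > 0 \<longrightarrow>
          (\<forall>a b. a < length (sigmaR p) \<and> b < length (sigmaR p) \<and>
                 sigmaR p ! a < x \<and> sigmaR p ! b > x \<longrightarrow> a < b)))"
proof -
  have "distinct (tau p)"
    using distinct_full_notation[OF assms] unfolding full_notation_decomp by simp
  then show ?thesis
    unfolding full_notation_decomp
    using avoids_u231_blocks_iff[OF sigmaL_nonpos sigmaR_nonneg _ tau_last_neg] by blast
qed

end
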